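(* Let $\emptyset\neq S\subseteq\mathbb{S}$. The following assertions are equivalent: (i) $S$ is closed and s-convex; (ii) $\mathbb{R}_+S$ is a pointed, closed, convex cone; (iii) there exists a pointed, closed, convex cone $K\subseteq\mathbb{R}^n$ such that $S=K\cap\mathbb{S}$; (iv) $S=\rho(\overline{\operatorname{conv}}\,S)$; (v) there exists a compact convex set $C\subseteq\mathbb{R}^n$ such that $S=\rho(C)$.
   Context: Standing setting: $n\ge 2$; $\mathbb{R}^n$ carries the usual inner product $\langle\cdot,\cdot\rangle$ and Euclidean norm; $o$ denotes the zero vector. $\Phi:\mathbb{R}^n\to\mathbb{R}_+:=[0,\infty)$ is a continuous function with $\Phi(tx)=t\Phi(x)$ for all $x\in\mathbb{R}^n$, $t\ge 0$, and $\Phi(x)=0$ iff $x=o$. Set $\mathbb{S}:=\{x\in\mathbb{R}^n\mid \Phi(x)=1\}$ (with the topology induced from $\mathbb{R}^n$), $\mathbb{P}:=(0,\infty)$, and $\rho:\mathbb{R}^n\to\{o\}\cup\mathbb{S}$, $\rho(x):=x/\Phi(x)$ for $x\neq o$, $\rho(o):=o$. For $\emptyset\ne\Gamma\subseteq\mathbb{R}$ and $\emptyset\ne A\subseteq\mathbb{R}^n$, $\Gamma A:=\{\gamma a\mid \gamma\in\Gamma,\ a\in A\}$. For $x,y\in\mathbb{S}$ and $\lambda\in[0,1]$, $\lambda x+_s(1-\lambda)y:=\rho(\lambda x+(1-\lambda)y)$. A nonempty set $S\subseteq\mathbb{S}$ is called s-convex if $\lambda x+_s(1-\lambda)y\in S$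 for all $x,y\in S$ and $\lambda\in[0,1]$. A cone $K\subseteq\mathbb{R}^n$ is pointed if $K\cap(-K)=\{o\}$. $\operatorname{conv}$ denotes the convex hull and $\overline{\operatorname{conv}}$ the closed convex hull. *)

theory Defs
  imports "HOL-Analysis.Analysis"
begin

definition sph :: "('a::real_normed_vector \<Rightarrow> real) \<Rightarrow> 'a set" where
  "sph \<Phi> = {x. \<Phi> x = 1}"

definition rho :: "('a::real_normed_vector \<Rightarrow> real) \<Rightarrow> 'a \<Rightarrow> 'a" where
  "rho \<Phi> x = (if x = 0 then 0 else x /\<^sub>R \<Phi> x)"

definition s_comb :: "('a::real_normed_vector \<Rightarrow> real) \<Rightarrow> real \<Rightarrow> 'a \<Rightarrow> 'a \<Rightarrow> 'a" where
  "s_comb \<Phi> l x y = rho \<Phi> (l *\<^sub>R x + (1 - l) *\<^sub>R y)"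

definition s_convex :: "('a::real_normed_vector \<Rightarrow> real) \<Rightarrow> 'a set \<Rightarrow> bool" where
  "s_convex \<Phi> S \<longleftrightarrow> S \<noteq> {} \<and> S \<subseteq> sph \<Phi> \<and>
     (\<forall>x\<in>S. \<forall>y\<in>S. \<forall>l\<in>{0..1}. s_comb \<Phi> l x y \<in> S)"

definition set_scale :: "real set \<Rightarrow> 'a::real_vector set \<Rightarrow> 'a set" where
  "set_scale \<Gamma> A = {\<gamma> *\<^sub>R a | \<gamma> a. \<gamma> \<in> \<Gamma> \<and> a \<in> A}"

definition pointed :: "'a::real_vector set \<Rightarrow> bool" where
  "pointed K \<longleftrightarrow> K \<inter> uminus ` K = {0}"

end

theory Submission
  imports Defs
begin

(*
  (i) \<Longrightarrow> (ii): if S \<subseteq> sph is s-convex, then for x, y \<in> S the segment [x, y] avoids 0 and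
  is mapped by \<rho> into S; since z = \<Phi> z \<rho> z, the segment lies in the cone R_+ S, which is
  therefore convex, and pointed because x + t y = 0 with t \<ge> 0 would put 0 on such a segment.
  The cone is closed because S is compact (as a closed subset of the compact set sph) and
  does not contain 0.
  (ii) \<Longrightarrow> (iii): take K = R_+ S.
  (iii) \<Longrightarrow> (iv): in a pointed convex cone K the set K - {0} is convex, so the compact set
  conv (K \<inter> sph) lies in K - {0} and \<rho> maps it back onto K \<inter> sph.
  (iv) \<Longrightarrow> (v): S is bounded.
  (v) \<Longrightarrow> (i): \<rho> is continuous away from 0, and an s-convex combination of \<rho> a and \<rho> b
  is the projection of a point of the segment [a, b] \<subseteq> C.
*)

lemma scaleR_add_in_closed_segment:
  fixes x y :: "'a::real_vector"
  assumes "0 \<le> c" "0 \<le> d" "0 < c + d"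
  shows "inverse (c + d) *\<^sub>R (c *\<^sub>R x + d *\<^sub>R y) \<in> closed_segment x y"
proof -
  have "inverse (c + d) *\<^sub>R (c *\<^sub>R x + d *\<^sub>R y)
      = (1 - d / (c + d)) *\<^sub>R x + (d / (c + d)) *\<^sub>R y"
    using assms by (simp add: scaleR_add_right field_simps)
  moreover have "0 \<le> d / (c + d)" "d / (c + d) \<le> 1"
    using assms by auto
  ultimately show ?thesis
    unfolding closed_segment_def by blast
qed

lemma convex_conic_hullI:
  fixes S :: "'a::real_vector set"
  assumes segments: "\<And>x y. x \<in> S \<Longrightarrow> y \<in> S \<Longrightarrow> closed_segment x y \<subseteq> conic hull S"
  shows "convex (conic hull S)"
proof -
  have "a + b \<in> conic hull S" if ab: "a \<in> conic hull S" "b \<in> conic hull S" for a b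
  proof -
    obtain c x where a: "a = c *\<^sub>R x" "0 \<le> c" "x \<in> S"
      using ab(1) by (auto simp: conic_hull_explicit)
    obtain d y where b: "b = d *\<^sub>R y" "0 \<le> d" "y \<in> S"
      using ab(2) by (auto simp: conic_hull_explicit)
    show ?thesis
    proof (cases "c + d = 0")
      case True
      then have "c = 0" "d = 0" using a(2) b(2) by auto
      then show ?thesis using a b \<open>a \<in> conic hull S\<close> by simp
    next
      case False
      then have "0 < c + d" using a b by simp
      then have "a + b = (c + d) *\<^sub>R (inverse (c + d) *\<^sub>R (c *\<^sub>R x + d *\<^sub>R y))"
        using a b by simp
      also have "\<dots> \<in> conic hull S"
      proof (rule conicD[OF conic_conic_hull])
        show "inverse (c + d) *\<^sub>R (c *\<^sub>R x + d *\<^sub>R y) \<in> conic hull S"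
          by (rule subsetD[OF segments[OF a(3) b(3)] scaleR_add_in_closed_segment[OF a(2) b(2) \<open>0 < c + d\<close>]])
      qed (use \<open>0 < c + d\<close> in simp)
      finally show ?thesis .
    qed
  qed
  then show ?thesis
    using convex_cone conic_conic_hull by (metis conic_def)
qed

lemma pointed_conic_hullI:
  fixes S :: "'a::real_vector set"
  assumes "S \<noteq> {}" and segments: "\<And>x y. x \<in> S \<Longrightarrow> y \<in> S \<Longrightarrow> 0 \<notin> closed_segment x y"
  shows "pointed (conic hull S)"
proof -
  have "w = 0" if w_mw: "w \<in> conic hull S" "- w \<in> conic hull S" for w
  proof -
    obtain c x where w: "w = c *\<^sub>R x" "0 \<le> c" "x \<in> S"
      using w_mw(1) by (auto simp: conic_hull_explicit)
    obtain d y where mw: "- w = d *\<^sub>R y" "0 \<le> d" "y \<in> S"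
      using w_mw(2) by (auto simp: conic_hull_explicit)
    show ?thesis
    proof (rule ccontr)
      assume "w \<noteq> 0"
      then have "0 < c + d" using w mw(2) by auto
      moreover have "c *\<^sub>R x + d *\<^sub>R y = 0"
        using w mw by (metis add.right_inverse)
      ultimately show False
        using scaleR_add_in_closed_segment[OF w(2) mw(2), where x=x and y=y] segments[OF w(3) mw(3)]
        by simp
    qed
  qed
  then show ?thesis
    using assms(1) unfolding pointed_def by force
qed

lemma convex_Diff_zero_if_pointed_cone:
  fixes K :: "'a::real_vector set"
  assumes "cone K" "pointed K" "convex K"
  shows "convex (K - {0})"
proof (rule convexI)
  fix x y and u v :: real
  assume x: "x \<in> K - {0}" and y: "y \<in> K - {0}" and uv: "0 \<le> u" "0 \<le> v" "u + v = 1"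
  have ux: "u *\<^sub>R x \<in> K" and vy: "v *\<^sub>R y \<in> K"
    using assms(1) x y uv by (auto simp: cone_def)
  have "u *\<^sub>R x + v *\<^sub>R y \<noteq> 0"
  proof
    assume sum: "u *\<^sub>R x + v *\<^sub>R y = 0"
    then have "u *\<^sub>R x \<in> K \<inter> uminus ` K"
      using ux vy by (metis IntI add.inverse_unique image_eqI minus_minus)
    then have "u *\<^sub>R x = 0"
      using assms(2) unfolding pointed_def by blast
    moreover from this have "v *\<^sub>R y = 0"
      using sum by (metis add.left_neutral)
    ultimately show False
      using x y uv by auto
  qed
  then show "u *\<^sub>R x + v *\<^sub>R y \<in> K - {0}"
    using convexD[OF assms(3)] x y uv by blast
qed

lemma set_scale_nonneg_eq_conic_hull: "set_scale {0..} S = conic hull S"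
  unfolding set_scale_def conic_hull_explicit by auto

lemma cone_conic_hull: "cone (conic hull S)"
  unfolding cone_def using conicD[OF conic_conic_hull] by blast

lemma cyclic_implications_imp_iff:
  assumes "P1 \<Longrightarrow> P2" "P2 \<Longrightarrow> P3" "P3 \<Longrightarrow> P4" "P4 \<Longrightarrow> P5" "P5 \<Longrightarrow> P1"
  shows "(P1 \<longleftrightarrow> P2) \<and> (P2 \<longleftrightarrow> P3) \<and> (P3 \<longleftrightarrow> P4) \<and> (P4 \<longleftrightarrow> P5)"
  using assms by blast

locale radial_gauge =
  fixes \<Phi> :: "'a::euclidean_space \<Rightarrow> real"
  assumes continuous: "continuous_on UNIV \<Phi>"
    and nonneg: "\<And>x. \<Phi> x \<ge> 0"
    and homogeneous: "\<And>x t. t \<ge> 0 \<Longrightarrow> \<Phi> (t *\<^sub>R x) = t * \<Phi> x"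
    and eq_0_iff: "\<And>x. \<Phi> x = 0 \<longleftrightarrow> x = 0"
begin

lemma Phi_0 [simp]: "\<Phi> 0 = 0"
  using eq_0_iff by simp

lemma Phi_pos: "x \<noteq> 0 \<Longrightarrow> 0 < \<Phi> x"
  using nonneg[of x] eq_0_iff[of x] by linarith

lemma rho_0 [simp]: "rho \<Phi> 0 = 0"
  by (simp add: rho_def)

lemma zero_notin_sph: "0 \<notin> sph \<Phi>"
  by (simp add: sph_def)

lemma rho_in_sph: "x \<noteq> 0 \<Longrightarrow> rho \<Phi> x \<in> sph \<Phi>"
  using Phi_pos[of x] by (simp add: rho_def sph_def homogeneous)

lemma rho_sph: "x \<in> sph \<Phi> \<Longrightarrow> rho \<Phi> x = x"
  using zero_notin_sph by (auto simp: rho_def sph_def)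

lemma rho_scaleR: "0 < c \<Longrightarrow> rho \<Phi> (c *\<^sub>R x) = rho \<Phi> x"
  by (cases "x = 0") (auto simp: rho_def homogeneous)

lemma scaleR_rho: "\<Phi> x *\<^sub>R rho \<Phi> x = x"
  using Phi_pos[of x] by (auto simp: rho_def)

lemma compact_sph: "compact (sph \<Phi>)"
proof -
  have closed: "closed (sph \<Phi>)"
    unfolding sph_def by (intro closed_Collect_eq continuous continuous_on_const)
  obtain u where u: "u \<in> sphere 0 1" "\<And>y. y \<in> sphere 0 1 \<Longrightarrow> \<Phi> u \<le> \<Phi> y"
  proof -
    have "sphere (0::'a) 1 \<noteq> {}" by simp
    then show ?thesis
      using continuous_attains_inf[OF compact_sphere _ continuous_on_subset[OF continuous subset_UNIV]] that
      by blast
  qed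
  then have "0 < \<Phi> u"
    using Phi_pos[of u] by (metis norm_zero mem_sphere_0 zero_neq_one)
  have "norm x \<le> 1 / \<Phi> u" if "x \<in> sph \<Phi>" for x
  proof -
    have "x \<noteq> 0" using that zero_notin_sph by auto
    then have "\<Phi> u \<le> \<Phi> (inverse (norm x) *\<^sub>R x)"
      by (intro u(2)) simp
    also have "\<dots> = inverse (norm x)"
      using that by (simp add: homogeneous sph_def)
    finally show ?thesis
      using \<open>0 < \<Phi> u\<close> \<open>x \<noteq> 0\<close> by (simp add: field_simps)
  qed
  then have "bounded (sph \<Phi>)"
    unfolding bounded_iff by blast
  with closed show ?thesis
    by (simp add: compact_eq_bounded_closed)
qed

lemma continuous_on_rho:
  assumes "0 \<notin> A"
  shows "continuous_on A (rho \<Phi>)"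
proof -
  have "continuous_on A (\<lambda>x. inverse (\<Phi> x) *\<^sub>R x)"
    using assms by (intro continuous_intros continuous_on_subset[OF continuous]) (auto simp: eq_0_iff)
  moreover have "\<And>x. x \<in> A \<Longrightarrow> rho \<Phi> x = inverse (\<Phi> x) *\<^sub>R x"
    using assms by (auto simp: rho_def)
  ultimately show ?thesis
    using continuous_on_cong by force
qed

lemma s_convex_rho_closed_segment:
  assumes "s_convex \<Phi> S" "x \<in> S" "y \<in> S" "z \<in> closed_segment x y"
  shows "rho \<Phi> z \<in> S"
proof -
  obtain u where u: "0 \<le> u" "u \<le> 1" "z = (1 - u) *\<^sub>R x + u *\<^sub>R y"
    using assms(4) by (auto simp: closed_segment_def)
  have "s_comb \<Phi> (1 - u) x y \<in> S"
    using assms(1-3) u(1,2) unfolding s_convex_def by simp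
  then show ?thesis
    by (simp add: s_comb_def u(3))
qed

lemma s_convex_zero_notin_closed_segment:
  assumes "s_convex \<Phi> S" "x \<in> S" "y \<in> S"
  shows "0 \<notin> closed_segment x y"
proof
  assume "0 \<in> closed_segment x y"
  then have "0 \<in> S"
    using s_convex_rho_closed_segment[OF assms \<open>0 \<in> closed_segment x y\<close>] by simp
  then show False
    using assms(1) zero_notin_sph unfolding s_convex_def by blast
qed

lemma s_convex_imp_convex_conic_hull:
  assumes "s_convex \<Phi> S"
  shows "convex (conic hull S)"
proof (rule convex_conic_hullI)
  fix x y assume "x \<in> S" "y \<in> S"
  show "closed_segment x y \<subseteq> conic hull S"
  proof
    fix z assume "z \<in> closed_segment x y"
    then have "rho \<Phi> z \<in> conic hull S"
      using s_convex_rho_closed_segment[OF assms \<open>x \<in> S\<close> \<open>y \<in> S\<close>] by (simp add: hull_inc)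
    then have "\<Phi> z *\<^sub>R rho \<Phi> z \<in> conic hull S"
      by (rule conicD[OF conic_conic_hull _ nonneg])
    then show "z \<in> conic hull S"
      by (simp only: scaleR_rho)
  qed
qed

lemma s_convex_imp_pointed_conic_hull:
  assumes "s_convex \<Phi> S"
  shows "pointed (conic hull S)"
proof (rule pointed_conic_hullI)
  show "S \<noteq> {}"
    using assms by (simp add: s_convex_def)
next
  fix x y assume "x \<in> S" "y \<in> S"
  then show "0 \<notin> closed_segment x y"
    by (rule s_convex_zero_notin_closed_segment[OF assms])
qed

lemma closed_conic_hull_if_closedin_sph:
  assumes "closedin (top_of_set (sph \<Phi>)) S"
  shows "closed (conic hull S)"
proof -
  obtain T where T: "closed T" "S = sph \<Phi> \<inter> T"
    using assms by (auto simp: closedin_closed)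
  then have "compact S"
    using compact_Int_closed[OF compact_sph] by simp
  moreover have "0 \<notin> S"
    using T(2) zero_notin_sph by blast
  ultimately show ?thesis
    by (intro closed_conic_hull disjI2 conjI)
qed

lemma conic_hull_Int_sph:
  assumes "S \<subseteq> sph \<Phi>"
  shows "conic hull S \<inter> sph \<Phi> = S"
proof
  show "conic hull S \<inter> sph \<Phi> \<subseteq> S"
    using assms by (auto simp: conic_hull_explicit sph_def homogeneous)
  show "S \<subseteq> conic hull S \<inter> sph \<Phi>"
    using assms by (auto intro: hull_inc)
qed

lemma rho_closure_convex_hull_Int_sph:
  assumes K: "cone K" "pointed K" "closed K" "convex K"
  shows "rho \<Phi> ` closure (convex hull (K \<inter> sph \<Phi>)) = K \<inter> sph \<Phi>"
proof -
  let ?S = "K \<inter> sph \<Phi>"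
  have "compact ?S"
    using compact_Int_closed[OF compact_sph K(3)] by (simp add: Int_commute)
  then have closure_eq: "closure (convex hull ?S) = convex hull ?S"
    by (simp add: compact_convex_hull compact_imp_closed)
  have "?S \<subseteq> K - {0}"
    using zero_notin_sph by blast
  then have hull_K: "convex hull ?S \<subseteq> K - {0}"
    by (rule hull_minimal) (rule convex_Diff_zero_if_pointed_cone[OF K(1,2,4)])
  have "rho \<Phi> z \<in> ?S" if "z \<in> convex hull ?S" for z
  proof -
    have "z \<in> K" "z \<noteq> 0"
      using that hull_K by auto
    then have "rho \<Phi> z \<in> K"
      using K(1) nonneg[of z] unfolding cone_def rho_def by simp
    then show ?thesis
      using rho_in_sph[OF \<open>z \<noteq> 0\<close>] by blast
  qed
  moreover have "?S \<subseteq> rho \<Phi> ` (convex hull ?S)"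
    using rho_sph hull_inc by (metis IntD2 image_eqI subsetI)
  ultimately show ?thesis
    unfolding closure_eq by blast
qed

lemma compact_closure_convex_hull_sph:
  assumes "S \<subseteq> sph \<Phi>"
  shows "compact (closure (convex hull S))"
proof -
  have "bounded S"
    by (rule bounded_subset[OF compact_imp_bounded[OF compact_sph] assms])
  then show ?thesis
    by (simp add: compact_closure bounded_convex_hull)
qed

lemma rho_image_subset_sph: "0 \<notin> C \<Longrightarrow> rho \<Phi> ` C \<subseteq> sph \<Phi>"
  using rho_in_sph by (metis image_subsetI)

lemma closedin_sph_rho_image:
  assumes "compact C" "0 \<notin> C"
  shows "closedin (top_of_set (sph \<Phi>)) (rho \<Phi> ` C)"
proof (rule closed_subset[OF rho_image_subset_sph[OF assms(2)]])
  show "closed (rho \<Phi> ` C)"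
    using compact_continuous_image[OF continuous_on_rho[OF assms(2)] assms(1)]
    by (rule compact_imp_closed)
qed

lemma s_convex_rho_image:
  assumes "convex C" "0 \<notin> C" "C \<noteq> {}"
  shows "s_convex \<Phi> (rho \<Phi> ` C)"
  unfolding s_convex_def
proof (intro conjI ballI)
  show "rho \<Phi> ` C \<noteq> {}"
    using assms(3) by simp
  show "rho \<Phi> ` C \<subseteq> sph \<Phi>"
    by (rule rho_image_subset_sph[OF assms(2)])
  fix x y l
  assume "x \<in> rho \<Phi> ` C" "y \<in> rho \<Phi> ` C" "l \<in> {0..1::real}"
  then obtain a b where a: "a \<in> C" "x = rho \<Phi> a" and b: "b \<in> C" "y = rho \<Phi> b"
    and l: "0 \<le> l" "l \<le> 1"
    by auto
  have "a \<noteq> 0" "b \<noteq> 0"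
    using a(1) b(1) assms(2) by auto
  then have Phi: "0 < \<Phi> a" "0 < \<Phi> b"
    using Phi_pos by auto
  define p q where "p = l / \<Phi> a" and "q = (1 - l) / \<Phi> b"
  have "0 \<le> p" "0 \<le> q"
    using l Phi by (auto simp: p_def q_def)
  moreover have "0 < p + q"
    using l Phi by (cases "l = 0") (auto simp: p_def q_def add_pos_nonneg)
  ultimately have "inverse (p + q) *\<^sub>R (p *\<^sub>R a + q *\<^sub>R b) \<in> C" (is "?c \<in> C")
    using scaleR_add_in_closed_segment closed_segment_subset[OF a(1) b(1) assms(1)] by blast
  have "l *\<^sub>R x + (1 - l) *\<^sub>R y = p *\<^sub>R a + q *\<^sub>R b"
    using \<open>a \<noteq> 0\<close> \<open>b \<noteq> 0\<close> by (simp add: a(2) b(2) rho_def p_def q_def divide_inverse)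
  also have "\<dots> = (p + q) *\<^sub>R ?c"
    using \<open>0 < p + q\<close> by simp
  finally have "s_comb \<Phi> l x y = rho \<Phi> ?c"
    using \<open>0 < p + q\<close> by (simp add: s_comb_def rho_scaleR)
  with \<open>?c \<in> C\<close> show "s_comb \<Phi> l x y \<in> rho \<Phi> ` C"
    by blast
qed

lemma closedin_s_convex_if_rho_image:
  assumes "S \<subseteq> sph \<Phi>" "S \<noteq> {}" and C: "compact C" "convex C" "S = rho \<Phi> ` C"
  shows "closedin (top_of_set (sph \<Phi>)) S \<and> s_convex \<Phi> S"
proof -
  have "C \<noteq> {}"
    using assms(2) unfolding C(3) by simp
  have "0 \<notin> C"
  proof
    assume "0 \<in> C"
    then have "0 \<in> S"
      unfolding C(3) by (metis rho_0 image_eqI)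
    with assms(1) zero_notin_sph show False
      by blast
  qed
  show ?thesis
    unfolding C(3)
    using closedin_sph_rho_image[OF C(1) \<open>0 \<notin> C\<close>] s_convex_rho_image[OF C(2) \<open>0 \<notin> C\<close> \<open>C \<noteq> {}\<close>] ..
qed

end

theorem corollary1:
  fixes \<Phi> :: "'a::euclidean_space \<Rightarrow> real" and S :: "'a set"
  assumes dim: "DIM('a) \<ge> 2"
    and cont: "continuous_on UNIV \<Phi>"
    and nonneg: "\<And>x. \<Phi> x \<ge> 0"
    and hom: "\<And>x t. t \<ge> 0 \<Longrightarrow> \<Phi> (t *\<^sub>R x) = t * \<Phi> x"
    and zero: "\<And>x. \<Phi> x = 0 \<longleftrightarrow> x = 0"
    and ne: "S \<noteq> {}"
    and sub: "S \<subseteq> sph \<Phi>"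
  shows
   "((closedin (top_of_set (sph \<Phi>)) S \<and> s_convex \<Phi> S)
       \<longleftrightarrow> (let K = set_scale {0..} S in cone K \<and> pointed K \<and> closed K \<and> convex K))
  \<and> ((let K = set_scale {0..} S in cone K \<and> pointed K \<and> closed K \<and> convex K)
       \<longleftrightarrow> (\<exists>K. cone K \<and> pointed K \<and> closed K \<and> convex K \<and> S = K \<inter> sph \<Phi>))
  \<and> ((\<exists>K. cone K \<and> pointed K \<and> closed K \<and> convex K \<and> S = K \<inter> sph \<Phi>)
       \<longleftrightarrow> S = rho \<Phi> ` closure (convex hull S))
  \<and> (S = rho \<Phi> ` closure (convex hull S)
       \<longleftrightarrow> (\<exists>C. compact C \<and> convex C \<and> S = rho \<Phi> ` C))"
  unfolding Let_def set_scale_nonneg_eq_conic_hull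
proof (rule cyclic_implications_imp_iff)
  interpret radial_gauge \<Phi>
    using cont nonneg hom zero by unfold_locales
  show "cone (conic hull S) \<and> pointed (conic hull S) \<and> closed (conic hull S) \<and> convex (conic hull S)"
    if "closedin (top_of_set (sph \<Phi>)) S \<and> s_convex \<Phi> S"
    using that by (simp add: cone_conic_hull s_convex_imp_pointed_conic_hull
      closed_conic_hull_if_closedin_sph s_convex_imp_convex_conic_hull)
  show "\<exists>K. cone K \<and> pointed K \<and> closed K \<and> convex K \<and> S = K \<inter> sph \<Phi>"
    if "cone (conic hull S) \<and> pointed (conic hull S) \<and> closed (conic hull S) \<and> convex (conic hull S)"
    using that by (intro exI[of _ "conic hull S"]) (simp add: conic_hull_Int_sph[OF sub])
  show "S = rho \<Phi> ` closure (convex hull S)"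
    if "\<exists>K. cone K \<and> pointed K \<and> closed K \<and> convex K \<and> S = K \<inter> sph \<Phi>"
    using that by (elim exE conjE) (simp add: rho_closure_convex_hull_Int_sph)
  show "\<exists>C. compact C \<and> convex C \<and> S = rho \<Phi> ` C"
    if "S = rho \<Phi> ` closure (convex hull S)"
    by (intro exI[of _ "closure (convex hull S)"] conjI compact_closure_convex_hull_sph[OF sub]
        convex_closure convex_convex_hull that)
  show "closedin (top_of_set (sph \<Phi>)) S \<and> s_convex \<Phi> S"
    if "\<exists>C. compact C \<and> convex C \<and> S = rho \<Phi> ` C"
    using that by (elim exE conjE) (rule closedin_s_convex_if_rho_image[OF sub ne])
qed

end
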